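(* Let $R$ be a set, $\mathcal{G}:(\mathbf{1},R)\rightarrow(Y,R)$ an object of $\mathrm{2Open}_R$, and $\mathcal{G}_\omega$ its $\omega$-iteration. Then $\mathcal{G}_\omega$, with coalgebra map $(\langle\mathrm{now},\mathrm{ltr}\rangle,\langle\mathrm{hd},\mathrm{tl}\rangle):\mathcal{G}_\omega\rightarrow F_\mathcal{G}\mathcal{G}_\omega$, is a final $F_\mathcal{G}$-coalgebra: for every $F_\mathcal{G}$-coalgebra $\gamma:\mathcal{H}\rightarrow F_\mathcal{G}\mathcal{H}$ there is a unique morphism $\beta:\mathcal{H}\rightarrow\mathcal{G}_\omega$ in $\mathrm{2Open}_R$ with $(\langle\mathrm{now},\mathrm{ltr}\rangle,\langle\mathrm{hd},\mathrm{tl}\rangle)\circ\beta=F_\mathcal{G}(\beta)\circ\gamma$.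
   Context: Fix a set $R$. Objects of $\mathrm{2Open}_R$ are open games $\mathcal{H}:(\mathbf{1},R)\rightarrow(Y_\mathcal{H},R)$ given by a strategy set $\Sigma_\mathcal{H}$, a move set $Y_\mathcal{H}$, a play function $P_\mathcal{H}:\Sigma_\mathcal{H}\rightarrow Y_\mathcal{H}$, an equilibrium function $E_\mathcal{H}:(Y_\mathcal{H}\rightarrow R)\rightarrow\mathcal{P}\Sigma_\mathcal{H}$, and identity coutility $C\,\sigma\,r=r$. A morphism $\beta:\mathcal{H}\rightarrow\mathcal{H}'$ is a pair $\beta_Y:Y_\mathcal{H}\rightarrow Y_{\mathcal{H}'}$, $\beta_\Sigma:\Sigma_\mathcal{H}\rightarrow\Sigma_{\mathcal{H}'}$ with $\beta_Y(P_\mathcal{H}\sigma)=P_{\mathcal{H}'}(\beta_\Sigma\sigma)$ for all $\sigma$, and such that for all $\sigma\in\Sigma_\mathcal{H}$ and $k:Y_{\mathcal{H}'}\rightarrow R$, $\sigma\in E_\mathcal{H}(k\circ\beta_Y)$ implies $\beta_\Sigma(\sigma)\in E_{\mathcal{H}'}(k)$; composition is componentwise. For the fixed $\mathcal{G}$ (data $\Sigma_\mathcal{G},Y,P_\mathcal{G},E_\mathcal{G}$), the functor $F_\mathcal{G}:\mathrm{2Open}_R\rightarrow\mathrm{2Open}_R$ sends $\mathcal{H}$ to the composite game $(Y\rightarrow\mathcal{H})\circ\mathcal{G}$, explicitly: strategies $\Sigma_\mathcal{G}\times(Y\rightarrow\Sigma_\mathcal{H})$, moves $Y\times Y_\mathcal{H}$,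 play $P(\sigma,f)=(P_\mathcal{G}\sigma,P_\mathcal{H}(f(P_\mathcal{G}\sigma)))$, identity coutility, and $(\sigma,f)\in E_{F_\mathcal{G}\mathcal{H}}(k)$ iff $\sigma\in E_\mathcal{G}(\lambda y.\,k(y,P_\mathcal{H}(f\,y)))$ and $f(y')\in E_\mathcal{H}(\lambda z.\,k(y',z))$ for all $y'\in Y$; on a morphism $\beta$, $(F_\mathcal{G}\beta)_\Sigma(\sigma,f)=(\sigma,\beta_\Sigma\circ f)$ and $(F_\mathcal{G}\beta)_Y(y,z)=(y,\beta_Y z)$. An $F_\mathcal{G}$-coalgebra is an object $\mathcal{H}$ with a morphism $\gamma:\mathcal{H}\rightarrow F_\mathcal{G}\mathcal{H}$. Notation: $Y^*$ finite words over $Y$, $\epsilon$ the empty word, $Y^\omega$ infinite streams over $Y$, $y\mathrel{::}w$ prepending, $\mathrm{hd}(y_0y_1\dots)=y_0$, $\mathrm{tl}(y_0y_1y_2\dots)=y_1y_2\dots$. For $\sigma:Y^*\rightarrow\Sigma_\mathcal{G}$, $\sigma_0=\mathrm{now}(\sigma)=\sigma(\epsilon)$ and $\sigma'=\mathrm{ltr}(\sigma)=\lambda y.\lambda w.\,\sigma(yw)$. The $\omega$-iteration $\mathcal{G}_\omega:(\mathbf{1},R)\rightarrow(Y^\omega,R)$ has strategies $\Sigma_\omega=Y^*\rightarrow\Sigma_\mathcal{G}$, moves $Y^\omega$, identity coutility, play function $P_\omega$ the unique function with $P_\omega\sigma=P_\mathcal{G}\sigma_0\mathrel{::}P_\omega(\lambda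 z.\,\sigma(P_\mathcal{G}\sigma_0\mathrel{::}z))$, and equilibrium function $E_\omega$ the greatest fixed point of the monotone operator $\Phi$ on $(\mathcal{P}\Sigma_\omega)^{(Y^\omega\rightarrow R)}$ (ordered pointwise by inclusion) given by: $\sigma\in\Phi(\Gamma)(k)$ iff $\sigma_0\in E_\mathcal{G}(\lambda y.\,k(y\mathrel{::}P_\omega(\sigma'y)))$ and for all $y'\in Y$, $\sigma'y'\in\Gamma(\lambda z.\,k(y'\mathrel{::}z))$. *)

theory Defs
  imports Main "HOL-Library.Stream"
begin

text \<open>An object of 2Open_R: a game (1,R) -> (Y,R) with identity coutility.
  The strategy set and move set are the types 's and 'y, the outcome set R is 'r.\<close>
record ('s, 'y, 'r) ogame =
  play  :: "'s \<Rightarrow> 'y"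
  equil :: "('y \<Rightarrow> 'r) \<Rightarrow> 's set"

definition is_morph ::
  "('s, 'y, 'r) ogame \<Rightarrow> ('s2, 'y2, 'r) ogame \<Rightarrow> ('y \<Rightarrow> 'y2) \<Rightarrow> ('s \<Rightarrow> 's2) \<Rightarrow> bool" where
  "is_morph H H' bY bS \<longleftrightarrow>
     (\<forall>\<sigma>. bY (play H \<sigma>) = play H' (bS \<sigma>)) \<and>
     (\<forall>\<sigma> k. \<sigma> \<in> equil H (k \<circ> bY) \<longrightarrow> bS \<sigma> \<in> equil H' k)"

text \<open>The functor F_G on objects: the composite game (Y -> H) o G.\<close>
definition Fobj ::
  "('gs, 'y, 'r) ogame \<Rightarrow> ('hs, 'hy, 'r) ogame \<Rightarrow> ('gs \<times> ('y \<Rightarrow> 'hs), 'y \<times> 'hy, 'r) ogame" where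
  "Fobj G H = \<lparr> play = (\<lambda>(\<sigma>, f). (play G \<sigma>, play H (f (play G \<sigma>)))),
                equil = (\<lambda>k. {(\<sigma>, f). \<sigma> \<in> equil G (\<lambda>y. k (y, play H (f y))) \<and>
                                     (\<forall>y'. f y' \<in> equil H (\<lambda>z. k (y', z)))}) \<rparr>"

definition FmorY :: "('hy \<Rightarrow> 'hy2) \<Rightarrow> ('y \<times> 'hy \<Rightarrow> 'y \<times> 'hy2)" where
  "FmorY bY = (\<lambda>(y, z). (y, bY z))"

definition FmorS :: "('hs \<Rightarrow> 'hs2) \<Rightarrow> ('gs \<times> ('y \<Rightarrow> 'hs) \<Rightarrow> 'gs \<times> ('y \<Rightarrow> 'hs2))" where
  "FmorS bS = (\<lambda>(\<sigma>, f). (\<sigma>, bS \<circ> f))"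

primcorec omega_play :: "('s, 'y, 'r) ogame \<Rightarrow> ('y list \<Rightarrow> 's) \<Rightarrow> 'y stream" where
  "shd (omega_play G \<sigma>) = play G (\<sigma> [])"
| "stl (omega_play G \<sigma>) = omega_play G (\<lambda>z. \<sigma> (play G (\<sigma> []) # z))"

definition omega_Phi ::
  "('s, 'y, 'r) ogame \<Rightarrow> (('y stream \<Rightarrow> 'r) \<Rightarrow> ('y list \<Rightarrow> 's) set)
     \<Rightarrow> (('y stream \<Rightarrow> 'r) \<Rightarrow> ('y list \<Rightarrow> 's) set)" where
  "omega_Phi G \<Gamma> = (\<lambda>k. {\<sigma>. \<sigma> [] \<in> equil G (\<lambda>y. k (y ## omega_play G (\<lambda>w. \<sigma> (y # w)))) \<and>
                          (\<forall>y'. (\<lambda>w. \<sigma> (y' # w)) \<in> \<Gamma> (\<lambda>z. k (y' ## z)))})"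

definition omega_equil :: "('s, 'y, 'r) ogame \<Rightarrow> ('y stream \<Rightarrow> 'r) \<Rightarrow> ('y list \<Rightarrow> 's) set" where
  "omega_equil G = gfp (omega_Phi G)"

definition omega :: "('s, 'y, 'r) ogame \<Rightarrow> ('y list \<Rightarrow> 's, 'y stream, 'r) ogame" where
  "omega G = \<lparr> play = omega_play G, equil = omega_equil G \<rparr>"

definition now :: "('y list \<Rightarrow> 's) \<Rightarrow> 's" where "now \<sigma> = \<sigma> []"
definition ltr :: "('y list \<Rightarrow> 's) \<Rightarrow> 'y \<Rightarrow> 'y list \<Rightarrow> 's" where "ltr \<sigma> = (\<lambda>y w. \<sigma> (y # w))"

end

theory Submission
  imports Defs
begin

text \<open>The unique coalgebra morphism into \<open>omega G\<close> is forced by the commuting square: its move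
  component is the stream unfold of \<open>\<gamma>Y\<close>, its strategy component follows \<open>\<gamma>S\<close> along a finite
  history. It preserves equilibria because the images
  of the equilibria of \<open>H\<close> form a post-fixed point of \<open>omega_Phi G\<close>, and \<open>omega_equil G\<close> is the
  greatest fixed point.\<close>

primcorec stream_unfold :: "('a \<Rightarrow> 'y \<times> 'a) \<Rightarrow> 'a \<Rightarrow> 'y stream" where
  "shd (stream_unfold g z) = fst (g z)"
| "stl (stream_unfold g z) = stream_unfold g (snd (g z))"

fun strategy_unfold :: "('a \<Rightarrow> 's \<times> ('y \<Rightarrow> 'a)) \<Rightarrow> 'a \<Rightarrow> 'y list \<Rightarrow> 's" where
  "strategy_unfold g \<sigma> [] = fst (g \<sigma>)"
| "strategy_unfold g \<sigma> (y # w) = strategy_unfold g (snd (g \<sigma>) y) w"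

lemma stream_unfold_eq_Stream: "stream_unfold g z = fst (g z) ## stream_unfold g (snd (g z))"
  by (rule stream.expand) simp

lemma hd_tl_comp_eq_FmorY_iff:
  "(\<lambda>s. (shd s, stl s)) \<circ> f = FmorY f \<circ> g \<longleftrightarrow> f = stream_unfold g"
proof
  assume "(\<lambda>s. (shd s, stl s)) \<circ> f = FmorY f \<circ> g"
  then have step: "shd (f z) = fst (g z) \<and> stl (f z) = f (snd (g z))" for z
    by (cases "g z") (auto simp: FmorY_def fun_eq_iff dest: spec[of _ z])
  have "f z = stream_unfold g z" for z
    by (coinduction arbitrary: z rule: stream.coinduct) (auto simp: step)
  then show "f = stream_unfold g" ..
next
  assume "f = stream_unfold g"
  then show "(\<lambda>s. (shd s, stl s)) \<circ> f = FmorY f \<circ> g"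
    by (auto simp: FmorY_def fun_eq_iff split: prod.split)
qed

lemma now_ltr_comp_eq_FmorS_iff:
  "(\<lambda>\<sigma>. (now \<sigma>, ltr \<sigma>)) \<circ> f = FmorS f \<circ> g \<longleftrightarrow> f = strategy_unfold g"
proof
  assume "(\<lambda>\<sigma>. (now \<sigma>, ltr \<sigma>)) \<circ> f = FmorS f \<circ> g"
  then have step: "f \<sigma> [] = fst (g \<sigma>) \<and> (\<forall>y w. f \<sigma> (y # w) = f (snd (g \<sigma>) y) w)" for \<sigma>
    by (cases "g \<sigma>") (auto simp: FmorS_def now_def ltr_def fun_eq_iff dest: spec[of _ \<sigma>])
  have "f \<sigma> w = strategy_unfold g \<sigma> w" for \<sigma> w
    by (induction w arbitrary: \<sigma>) (simp_all add: step)
  then show "f = strategy_unfold g" by (simp add: fun_eq_iff)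
next
  assume "f = strategy_unfold g"
  then show "(\<lambda>\<sigma>. (now \<sigma>, ltr \<sigma>)) \<circ> f = FmorS f \<circ> g"
    by (auto simp: FmorS_def now_def ltr_def fun_eq_iff split: prod.split)
qed

lemma mono_omega_Phi: "mono (omega_Phi G)"
  unfolding mono_def le_fun_def omega_Phi_def by blast

lemma omega_equil_unfold: "omega_equil G = omega_Phi G (omega_equil G)"
  unfolding omega_equil_def by (rule gfp_unfold[OF mono_omega_Phi])

lemma is_morph_omega_Fobj:
  "is_morph (omega G) (Fobj G (omega G)) (\<lambda>s. (shd s, stl s)) (\<lambda>\<sigma>. (now \<sigma>, ltr \<sigma>))"
  unfolding is_morph_def
proof (intro conjI allI impI)
  fix \<sigma>
  show "(shd (play (omega G) \<sigma>), stl (play (omega G) \<sigma>)) = play (Fobj G (omega G)) (now \<sigma>, ltr \<sigma>)"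
    by (simp add: omega_def Fobj_def now_def ltr_def)
next
  fix \<sigma> k
  assume "\<sigma> \<in> equil (omega G) (k \<circ> (\<lambda>s. (shd s, stl s)))"
  then have "\<sigma> \<in> omega_Phi G (omega_equil G) (k \<circ> (\<lambda>s. (shd s, stl s)))"
    using omega_equil_unfold[of G] by (simp add: omega_def)
  then show "(now \<sigma>, ltr \<sigma>) \<in> equil (Fobj G (omega G)) k"
    by (simp add: omega_Phi_def omega_def Fobj_def now_def ltr_def)
qed

lemma stream_unfold_play:
  assumes "is_morph H (Fobj G H) \<gamma>Y \<gamma>S"
  shows "stream_unfold \<gamma>Y (play H \<sigma>) = omega_play G (strategy_unfold \<gamma>S \<sigma>)"
proof (coinduction arbitrary: \<sigma> rule: stream.coinduct)
  case (Eq_stream \<sigma>)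
  obtain s0 f where \<gamma>S: "\<gamma>S \<sigma> = (s0, f)" by (cases "\<gamma>S \<sigma>")
  have "\<gamma>Y (play H \<sigma>) = (play G s0, play H (f (play G s0)))"
    using assms \<gamma>S unfolding is_morph_def by (simp add: Fobj_def)
  with \<gamma>S show ?case
    by (auto intro!: exI[of _ "f (play G s0)"] simp: fun_eq_iff)
qed

lemma strategy_unfold_in_omega_equil:
  assumes m: "is_morph H (Fobj G H) \<gamma>Y \<gamma>S"
    and eq: "\<sigma> \<in> equil H (k \<circ> stream_unfold \<gamma>Y)"
  shows "strategy_unfold \<gamma>S \<sigma> \<in> omega_equil G k"
proof -
  define S where "S k = strategy_unfold \<gamma>S ` equil H (k \<circ> stream_unfold \<gamma>Y)" for k
  have "S \<le> omega_Phi G S"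
  proof (intro le_funI subsetI)
    fix k t
    assume "t \<in> S k"
    then obtain \<sigma> where t: "t = strategy_unfold \<gamma>S \<sigma>"
      and \<sigma>: "\<sigma> \<in> equil H (k \<circ> stream_unfold \<gamma>Y)"
      by (auto simp: S_def)
    obtain s0 f where \<gamma>S: "\<gamma>S \<sigma> = (s0, f)" by (cases "\<gamma>S \<sigma>")
    let ?k' = "\<lambda>(y, z). k (y ## stream_unfold \<gamma>Y z)"
    have "?k' \<circ> \<gamma>Y = k \<circ> stream_unfold \<gamma>Y"
      by (auto simp: fun_eq_iff split: prod.split) (metis stream_unfold_eq_Stream fst_conv snd_conv)
    with \<sigma> m have "\<gamma>S \<sigma> \<in> equil (Fobj G H) ?k'"
      unfolding is_morph_def by metis
    then have "s0 \<in> equil G (\<lambda>y. k (y ## stream_unfold \<gamma>Y (play H (f y))))"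
      and "f y' \<in> equil H ((\<lambda>z. k (y' ## z)) \<circ> stream_unfold \<gamma>Y)" for y'
      using \<gamma>S by (auto simp: Fobj_def comp_def)
    then show "t \<in> omega_Phi G S k"
      using \<gamma>S by (auto simp: omega_Phi_def t S_def stream_unfold_play[OF m] fun_eq_iff)
  qed
  then have "S \<le> omega_equil G"
    unfolding omega_equil_def by (rule gfp_upperbound)
  with eq show ?thesis
    by (auto simp: S_def le_fun_def)
qed

lemma is_morph_unfold:
  assumes "is_morph H (Fobj G H) \<gamma>Y \<gamma>S"
  shows "is_morph H (omega G) (stream_unfold \<gamma>Y) (strategy_unfold \<gamma>S)"
  using stream_unfold_play[OF assms] strategy_unfold_in_omega_equil[OF assms]
  by (simp add: is_morph_def omega_def)

theorem theorem16:
  fixes G :: "('s, 'y, 'r) ogame"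
  shows "is_morph (omega G) (Fobj G (omega G)) (\<lambda>s. (shd s, stl s)) (\<lambda>\<sigma>. (now \<sigma>, ltr \<sigma>))
    \<and> (\<forall>(H :: ('hs, 'hy, 'r) ogame) \<gamma>Y \<gamma>S.
         is_morph H (Fobj G H) \<gamma>Y \<gamma>S \<longrightarrow>
         (\<exists>!(\<beta>Y, \<beta>S). is_morph H (omega G) \<beta>Y \<beta>S \<and>
              (\<lambda>s. (shd s, stl s)) \<circ> \<beta>Y = FmorY \<beta>Y \<circ> \<gamma>Y \<and>
              (\<lambda>\<sigma>. (now \<sigma>, ltr \<sigma>)) \<circ> \<beta>S = FmorS \<beta>S \<circ> \<gamma>S))"
proof (intro conjI allI impI)
  show "is_morph (omega G) (Fobj G (omega G)) (\<lambda>s. (shd s, stl s)) (\<lambda>\<sigma>. (now \<sigma>, ltr \<sigma>))"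
    by (rule is_morph_omega_Fobj)
next
  fix H :: "('hs, 'hy, 'r) ogame" and \<gamma>Y \<gamma>S
  assume "is_morph H (Fobj G H) \<gamma>Y \<gamma>S"
  then show "\<exists>!(\<beta>Y, \<beta>S). is_morph H (omega G) \<beta>Y \<beta>S \<and>
              (\<lambda>s. (shd s, stl s)) \<circ> \<beta>Y = FmorY \<beta>Y \<circ> \<gamma>Y \<and>
              (\<lambda>\<sigma>. (now \<sigma>, ltr \<sigma>)) \<circ> \<beta>S = FmorS \<beta>S \<circ> \<gamma>S"
    unfolding hd_tl_comp_eq_FmorY_iff now_ltr_comp_eq_FmorS_iff
    by (auto intro!: ex1I[of _ "(stream_unfold \<gamma>Y, strategy_unfold \<gamma>S)"] is_morph_unfold)
qed

end
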